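(* Let $n,p\ge 1$, let $X\in\mathbb{R}^{n\times p}$ be an arbitrary design matrix with rows $\mathbf{x}_1^T,\dots,\mathbf{x}_n^T$, let $\mathbf{y}=(y_1,\dots,y_n)\in\{0,1\}^n$ be arbitrary observed binary responses, let $\boldsymbol{\beta}_a\in\mathbb{R}^p$ be arbitrary, and let $\Sigma_a\in\mathbb{R}^{p\times p}$ be an arbitrary positive definite matrix. Let $\nu>2$. Then the Markov operator $K$ on $L^2_0(\pi(\cdot\mid\mathbf{y}))$ associated with the robit data augmentation (DA) Markov chain (described in the context) is trace class, i.e. $\int_{\mathbb{R}^p} k(\boldsymbol{\beta},\boldsymbol{\beta})\,d\boldsymbol{\beta}<\infty$, so that the spectrum of $K$ is countable and its eigenvalues are summable.
   Context: Bayesian robit regression model: $Y_1,\dots,Y_n$ are independent with $P(Y_i=1\mid\boldsymbol{\beta})=F_\nu(\mathbf{x}_i^T\boldsymbol{\beta})$, where $F_\nu$ is the CDF of the Student's $t$-distribution with $\nu$ degrees of freedom, location $0$, scale $1$; the prior is $\boldsymbol{\beta}\sim\mathcal{N}_p(\boldsymbol{\beta}_a,\Sigma_a^{-1})$. Let $\pi(\boldsymbol{\beta}\mid\mathbf{y})$ denote the posterior density. Latent variables: $(Z_i,\lambda_i)$ independent with $\lambda_i\sim\mathrm{Gamma}(\nu/2,\nu/2)$ (shape, rate), $Z_i\mid\lambda_i\sim\mathcal{N}(\mathbf{x}_i^T\boldsymbol{\beta},1/\lambda_i)$, $Y_i=1_{\{Z_i>0\}}$. The robit DA chain on $\mathbb{R}^p$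 moves from $\boldsymbol{\beta}$ to $\boldsymbol{\beta}'$ as follows: (1) independently for $i=1,\dots,n$, draw $z_i$ from the $t_\nu$ distribution with location $\mathbf{x}_i^T\boldsymbol{\beta}$ and scale $1$, truncated to $(0,\infty)$ if $y_i=1$ and to $(-\infty,0)$ if $y_i=0$; then draw $\lambda_i\sim\mathrm{Gamma}\big(\tfrac{\nu+1}{2},\tfrac{\nu+(z_i-\mathbf{x}_i^T\boldsymbol{\beta})^2}{2}\big)$ (shape, rate); (2) with $\Lambda=\mathrm{diag}(\lambda_1,\dots,\lambda_n)$ and $\mathbf{z}=(z_1,\dots,z_n)^T$, draw $\boldsymbol{\beta}'\sim\mathcal{N}_p\big((X^T\Lambda X+\Sigma_a)^{-1}(X^T\Lambda\mathbf{z}+\Sigma_a\boldsymbol{\beta}_a),\,(X^T\Lambda X+\Sigma_a)^{-1}\big)$. Its transition density is $k(\boldsymbol{\beta},\boldsymbol{\beta}')=\int_{\mathbb{R}^n_+}\int_{\mathbb{R}^n}\pi(\boldsymbol{\beta}'\mid\boldsymbol{\lambda},\mathbf{z},\mathbf{y})\,\pi(\boldsymbol{\lambda},\mathbf{z}\mid\boldsymbol{\beta},\mathbf{y})\,d\mathbf{z}\,d\boldsymbol{\lambda}$, where these are the conditional densities from steps (2) and (1). It has stationary density $\pi(\boldsymbol{\beta}\mid\mathbf{y})$ and is reversible; $K$ is the operator $(Kf)(\boldsymbol{\beta})=\int k(\boldsymbol{\beta},\boldsymbol{\beta}')f(\boldsymbol{\beta}')d\boldsymbol{\beta}'$ on the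 space $L^2_0(\pi(\cdot\mid\mathbf{y}))$ of mean-zero square-integrable functions with respect to the posterior; it is positive and self-adjoint. *)

theory Defs
  imports "HOL-Analysis.Analysis"
begin

definition t_pdf :: "real \<Rightarrow> real \<Rightarrow> real" where
  "t_pdf \<nu> x = Gamma ((\<nu> + 1) / 2) / (sqrt (\<nu> * pi) * Gamma (\<nu> / 2))
                  * (1 + x\<^sup>2 / \<nu>) powr (- (\<nu> + 1) / 2)"

definition t_cdf :: "real \<Rightarrow> real \<Rightarrow> real" where
  "t_cdf \<nu> x = (LBINT t:{..x}. t_pdf \<nu> t)"

definition trunc_t_pdf :: "real \<Rightarrow> real \<Rightarrow> real \<Rightarrow> real \<Rightarrow> real" where
  "trunc_t_pdf \<nu> m yi z =
     (if yi = 1 then (if z > 0 then t_pdf \<nu> (z - m) / t_cdf \<nu> m else 0)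
      else (if z < 0 then t_pdf \<nu> (z - m) / (1 - t_cdf \<nu> m) else 0))"

definition gamma_pdf :: "real \<Rightarrow> real \<Rightarrow> real \<Rightarrow> real" where
  "gamma_pdf a b x = (if x > 0 then b powr a * x powr (a - 1) * exp (- b * x) / Gamma a else 0)"

definition mvn_prec_pdf :: "real^'p \<Rightarrow> real^'p^'p \<Rightarrow> real^'p \<Rightarrow> real" where
  "mvn_prec_pdf mu Q b =
     (2 * pi) powr (- real CARD('p) / 2) * sqrt (det Q)
     * exp (- ((b - mu) \<bullet> (Q *v (b - mu))) / 2)"

definition diag_mat :: "real^'n \<Rightarrow> real^'n^'n" where
  "diag_mat l = (\<chi> i j. if i = j then l $ i else 0)"

definition pos_def :: "real^'p^'p \<Rightarrow> bool" where
  "pos_def S \<longleftrightarrow> transpose S = S \<and> (\<forall>x. x \<noteq> 0 \<longrightarrow> x \<bullet> (S *v x) > 0)"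

text \<open>Conditional density of (lambda, z) given beta, y (step (1) of the robit DA chain).\<close>
definition robit_latent_pdf ::
  "real \<Rightarrow> real^'p^'n \<Rightarrow> real^'n \<Rightarrow> real^'p \<Rightarrow> real^'n \<Rightarrow> real^'n \<Rightarrow> real" where
  "robit_latent_pdf \<nu> X y b l z =
     (\<Prod>i\<in>UNIV. trunc_t_pdf \<nu> ((X $ i) \<bullet> b) (y $ i) (z $ i)
        * gamma_pdf ((\<nu> + 1) / 2) ((\<nu> + (z $ i - (X $ i) \<bullet> b)\<^sup>2) / 2) (l $ i))"

text \<open>Conditional density of beta' given (lambda, z, y) (step (2)).\<close>
definition robit_beta_pdf ::
  "real^'p^'n \<Rightarrow> real^'p \<Rightarrow> real^'p^'p \<Rightarrow> real^'n \<Rightarrow> real^'n \<Rightarrow> real^'p \<Rightarrow> real" where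
  "robit_beta_pdf X ba Sa l z b' =
     (let Q = transpose X ** diag_mat l ** X + Sa
      in mvn_prec_pdf (matrix_inv Q *v (transpose X *v (diag_mat l *v z) + Sa *v ba)) Q b')"

definition robit_da_kernel ::
  "real \<Rightarrow> real^'p^'n \<Rightarrow> real^'n \<Rightarrow> real^'p \<Rightarrow> real^'p^'p \<Rightarrow> real^'p \<Rightarrow> real^'p \<Rightarrow> ennreal" where
  "robit_da_kernel \<nu> X y ba Sa b b' =
     (\<integral>\<^sup>+ l. indicator {l. \<forall>i. l $ i > 0} l *
        (\<integral>\<^sup>+ z. ennreal (robit_beta_pdf X ba Sa l z b' * robit_latent_pdf \<nu> X y b l z) \<partial>lborel)
      \<partial>lborel)"

end

theory Submission
  imports Defs "HOL-Probability.Distributions"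
begin

text \<open>On the diagonal \<open>\<beta>' = \<beta>\<close> the normal density of step (2) is
  \<open>(2\<pi>)\<^bsup>-p/2\<^esup> \<surd>det Q exp(-q/2)\<close> with precision \<open>Q = X\<^sup>T\<Lambda>X + \<Sigma>\<^sub>a\<close>. The entries of \<open>Q\<close> grow
  linearly in \<open>\<Sum>\<lambda>\<^sub>i\<close>, so \<open>\<surd>det Q\<close> is at most \<open>C exp(\<kappa>(1 + \<Sum>\<lambda>\<^sub>i)/2)\<close> for any \<open>\<kappa> > 0\<close>; and since
  \<open>Q(\<beta> - \<mu>) = X\<^sup>T\<Lambda>(X\<beta> - z) + \<Sigma>\<^sub>a(\<beta> - \<beta>\<^sub>a)\<close>, the form \<open>q\<close> dominates \<open>g\<parallel>\<beta> - \<beta>\<^sub>a\<parallel>\<close> up to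
  \<open>\<kappa>(1 + \<Sum>\<lambda>\<^sub>i(1 + |z\<^sub>i - x\<^sub>i\<^sup>T\<beta>|))\<close>. Hence \<open>k(\<beta>, \<beta>)\<close> is at most \<open>K exp(-g\<parallel>\<beta> - \<beta>\<^sub>a\<parallel>)\<close> times a
  product over \<open>i\<close> of latent integrals in which the truncated t and Gamma densities of step (1)
  are tilted by \<open>exp(\<kappa>\<lambda>\<^sub>i(1 + |z\<^sub>i - x\<^sub>i\<^sup>T\<beta>|))\<close>. For \<open>\<kappa> = min(\<nu>, 1)/8\<close> the tilt costs at most half
  of the Gamma rate \<open>(\<nu> + (z\<^sub>i - x\<^sub>i\<^sup>T\<beta>)\<^sup>2)/2\<close>, so each latent integral is at most
  \<open>2\<^bsup>(\<nu>+1)/2\<^esup>\<close>, and \<open>exp(-g\<parallel>\<beta> - \<beta>\<^sub>a\<parallel>)\<close> is integrable. The argument only needs \<open>\<nu> > 0\<close>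
  and never uses that the responses are binary.\<close>

section \<open>Gamma, Gaussian and Student t integrals\<close>

lemma nn_integral_gamma_kernel:
  fixes a c :: real
  assumes a: "a > 0" and c: "c > 0"
  shows "(\<integral>\<^sup>+t. ennreal (indicator {0<..} t * t powr (a - 1) * exp (- c * t)) \<partial>lborel)
       = ennreal (Gamma a / c powr a)"
proof -
  define f where "f u = ennreal (indicator {0..} u * u powr (a - 1) / exp u)" for u :: real
  define I where "I = (\<integral>\<^sup>+t. ennreal (indicator {0<..} t * t powr (a - 1) * exp (- c * t)) \<partial>lborel)"
  have f_scaled: "f (0 + c * t) = ennreal (c powr (a - 1))
      * ennreal (indicator {0<..} t * t powr (a - 1) * exp (- c * t))" for t
  proof (cases "t > 0")
    case True
    then have "(c * t) powr (a - 1) / exp (c * t) = c powr (a - 1) * (t powr (a - 1) * exp (- c * t))"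
      using c by (simp add: powr_mult exp_minus divide_inverse)
    then show ?thesis
      using c True unfolding f_def by (simp add: ennreal_mult'' indicator_def)
  qed (use c in \<open>auto simp: f_def indicator_def zero_le_mult_iff\<close>)
  have f_measurable: "f \<in> borel_measurable borel"
    unfolding f_def by measurable
  have "ennreal (Gamma a) = (\<integral>\<^sup>+u. f u \<partial>lborel)"
    using Gamma_conv_nn_integral_real[OF a] by (simp add: f_def)
  also have "\<dots> = ennreal c * (\<integral>\<^sup>+t. f (0 + c * t) \<partial>lborel)"
    using nn_integral_real_affine[OF f_measurable, of c 0] c by simp
  also have "(\<integral>\<^sup>+t. f (0 + c * t) \<partial>lborel) = ennreal (c powr (a - 1)) * I"
    unfolding f_scaled I_def by (rule nn_integral_cmult) measurable
  also have "ennreal c * (ennreal (c powr (a - 1)) * I) = ennreal (c * c powr (a - 1)) * I"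
    using c by (simp add: ennreal_mult' mult.assoc)
  also have "c * c powr (a - 1) = c powr a"
    using c by (simp add: powr_diff)
  finally have "ennreal (Gamma a) = ennreal (c powr a) * I" .
  then have "I = ennreal (Gamma a) / ennreal (c powr a)"
    using c by (simp add: ennreal_mult_divide_eq mult.commute)
  then show ?thesis
    using c Gamma_real_pos[OF a] unfolding I_def by (simp add: divide_ennreal)
qed

lemma nn_integral_exp_neg_square:
  fixes c :: real
  assumes c: "c > 0"
  shows "(\<integral>\<^sup>+x. ennreal (exp (- (c * x\<^sup>2))) \<partial>lborel) = ennreal (sqrt (pi / c))"
proof -
  define \<sigma> where "\<sigma> = sqrt (1 / (2 * c))"
  have \<sigma>: "\<sigma> > 0" "\<sigma>\<^sup>2 = 1 / (2 * c)"
    using c by (simp_all add: \<sigma>_def)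
  interpret prob_space "density lborel (normal_density 0 \<sigma>)"
    using prob_space_normal_density[OF \<sigma>(1)] by simp
  have density_1: "(\<integral>\<^sup>+x. ennreal (normal_density 0 \<sigma> x) \<partial>lborel) = 1"
    using emeasure_space_1 by (simp add: emeasure_density)
  have "exp (- (c * x\<^sup>2)) = sqrt (pi / c) * normal_density 0 \<sigma> x" for x
  proof -
    have "2 * pi * \<sigma>\<^sup>2 = pi / c" and "- (x - 0)\<^sup>2 / (2 * \<sigma>\<^sup>2) = - (c * x\<^sup>2)"
      using c by (simp_all add: \<sigma>(2))
    then show ?thesis
      unfolding normal_density_def using c by simp
  qed
  then have "(\<integral>\<^sup>+x. ennreal (exp (- (c * x\<^sup>2))) \<partial>lborel)
      = (\<integral>\<^sup>+x. ennreal (sqrt (pi / c)) * ennreal (normal_density 0 \<sigma> x) \<partial>lborel)"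
    using c by (intro nn_integral_cong) (simp add: ennreal_mult')
  also have "\<dots> = ennreal (sqrt (pi / c))"
    by (subst nn_integral_cmult) (simp_all add: density_1)
  finally show ?thesis .
qed

lemma nn_integral_gamma_gaussian_kernel:
  fixes v s l :: real
  assumes v: "v > 0"
  shows "(\<integral>\<^sup>+x. ennreal (indicator {0<..} l * l powr (s - 1) * exp (- (1 + x\<^sup>2 / v) * l)) \<partial>lborel)
       = ennreal (sqrt (pi * v)) * ennreal (indicator {0<..} l * l powr (s - 1 / 2 - 1) * exp (- 1 * l))"
proof (cases "l > 0")
  case True
  have "ennreal (indicator {0<..} l * l powr (s - 1) * exp (- (1 + x\<^sup>2 / v) * l))
      = ennreal (l powr (s - 1) * exp (- l)) * ennreal (exp (- (l / v * x\<^sup>2)))" for x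
  proof -
    have "indicator {0<..} l * l powr (s - 1) * exp (- (1 + x\<^sup>2 / v) * l)
        = l powr (s - 1) * exp (- l) * exp (- (l / v * x\<^sup>2))"
      using True by (simp add: exp_add[symmetric] algebra_simps)
    then show ?thesis by (rule ssubst) (rule ennreal_mult', simp)
  qed
  then have "(\<integral>\<^sup>+x. ennreal (indicator {0<..} l * l powr (s - 1) * exp (- (1 + x\<^sup>2 / v) * l)) \<partial>lborel)
      = ennreal (l powr (s - 1) * exp (- l)) * (\<integral>\<^sup>+x. ennreal (exp (- (l / v * x\<^sup>2))) \<partial>lborel)"
    by (simp only:) (rule nn_integral_cmult, measurable)
  also have "\<dots> = ennreal (l powr (s - 1) * exp (- l)) * ennreal (sqrt (pi / (l / v)))"
    by (subst nn_integral_exp_neg_square) (use True v in auto)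
  also have "\<dots> = ennreal (l powr (s - 1) * exp (- l) * sqrt (pi / (l / v)))"
    by (rule ennreal_mult'[symmetric]) simp
  also have "l powr (s - 1) * exp (- l) * sqrt (pi / (l / v))
      = sqrt (pi * v) * (l powr (s - 1 / 2 - 1) * exp (- 1 * l))"
  proof -
    have "sqrt (pi / (l / v)) = sqrt (pi * v) * l powr (- (1 / 2))"
      using True v by (simp add: real_sqrt_divide powr_minus_divide powr_half_sqrt)
    moreover have "l powr (s - 1) * l powr (- (1 / 2)) = l powr (s - 1 / 2 - 1)"
      by (simp add: powr_add[symmetric])
    ultimately show ?thesis by (simp add: algebra_simps)
  qed
  finally show ?thesis
    using True v by (simp add: ennreal_mult')
qed (simp add: indicator_def)

text \<open>The Student t kernel is a Gamma mixture of Gaussian kernels; integrate out the mixing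
  variable last (Tonelli).\<close>
lemma nn_integral_student_t_kernel:
  fixes v :: real
  assumes v: "v > 0"
  shows "(\<integral>\<^sup>+x. ennreal ((1 + x\<^sup>2 / v) powr (- (v + 1) / 2)) \<partial>lborel)
       = ennreal (sqrt (pi * v) * Gamma (v / 2) / Gamma ((v + 1) / 2))"
proof -
  define s where "s = (v + 1) / 2"
  have s: "s > 0" and Gs: "Gamma s > 0" and s_half: "s - 1 / 2 = v / 2"
    using v by (simp_all add: s_def Gamma_real_pos field_simps)
  define F where
    "F x l = ennreal (indicator {0<..} l * l powr (s - 1) * exp (- (1 + x\<^sup>2 / v) * l))" for x l :: real
  have F_measurable: "(\<lambda>(x, l). F x l) \<in> borel_measurable (lborel \<Otimes>\<^sub>M lborel)"
    unfolding F_def by measurable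
  have mixture: "ennreal ((1 + x\<^sup>2 / v) powr (- (v + 1) / 2))
      = ennreal (1 / Gamma s) * (\<integral>\<^sup>+l. F x l \<partial>lborel)" for x
  proof -
    have r: "1 + x\<^sup>2 / v > 0" using v by (simp add: add_pos_nonneg)
    have "- (v + 1) / 2 = - s" unfolding s_def by (simp add: field_simps)
    then have "(1 + x\<^sup>2 / v) powr (- (v + 1) / 2) = 1 / Gamma s * (Gamma s / (1 + x\<^sup>2 / v) powr s)"
      using Gs by (simp add: powr_minus_divide)
    then show ?thesis
      unfolding F_def nn_integral_gamma_kernel[OF s r] using Gs by (simp add: ennreal_mult'[symmetric])
  qed
  have "(\<integral>\<^sup>+x. ennreal ((1 + x\<^sup>2 / v) powr (- (v + 1) / 2)) \<partial>lborel)
      = ennreal (1 / Gamma s) * (\<integral>\<^sup>+x. (\<integral>\<^sup>+l. F x l \<partial>lborel) \<partial>lborel)"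
    unfolding mixture
    by (rule nn_integral_cmult) (use lborel.borel_measurable_nn_integral[OF F_measurable] in simp)
  also have "(\<integral>\<^sup>+x. (\<integral>\<^sup>+l. F x l \<partial>lborel) \<partial>lborel) = (\<integral>\<^sup>+l. (\<integral>\<^sup>+x. F x l \<partial>lborel) \<partial>lborel)"
    using F_measurable by (subst lborel_pair.Fubini') (simp_all add: case_prod_unfold)
  also have "\<dots> = ennreal (sqrt (pi * v)) * ennreal (Gamma (v / 2) / 1 powr (v / 2))"
    unfolding F_def nn_integral_gamma_gaussian_kernel[OF v] s_half
    by (subst nn_integral_cmult) (measurable, use nn_integral_gamma_kernel[of "v / 2" 1] v in simp)
  also have "ennreal (1 / Gamma s) * (ennreal (sqrt (pi * v)) * ennreal (Gamma (v / 2) / 1 powr (v / 2)))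
      = ennreal (1 / Gamma s * (sqrt (pi * v) * Gamma (v / 2)))"
    using Gs Gamma_real_pos[of "v / 2"] v by (simp add: ennreal_mult'[symmetric])
  finally show ?thesis by (simp add: s_def)
qed

lemma t_pdf_pos:
  assumes "v > 0"
  shows "t_pdf v x > 0"
proof -
  have "1 + x\<^sup>2 / v > 0" using assms by (simp add: add_pos_nonneg)
  then show ?thesis unfolding t_pdf_def using assms by simp
qed

lemma t_pdf_minus [simp]: "t_pdf v (- x) = t_pdf v x"
  unfolding t_pdf_def by simp

lemma borel_measurable_t_pdf [measurable]: "t_pdf v \<in> borel_measurable borel"
  unfolding t_pdf_def by measurable

lemma nn_integral_t_pdf:
  assumes v: "v > 0"
  shows "(\<integral>\<^sup>+x. ennreal (t_pdf v x) \<partial>lborel) = 1"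
proof -
  define C where "C = Gamma ((v + 1) / 2) / (sqrt (v * pi) * Gamma (v / 2))"
  have C: "C \<ge> 0" using v by (simp add: C_def Gamma_real_pos less_imp_le)
  have "(\<integral>\<^sup>+x. ennreal (t_pdf v x) \<partial>lborel)
      = ennreal C * (\<integral>\<^sup>+x. ennreal ((1 + x\<^sup>2 / v) powr (- (v + 1) / 2)) \<partial>lborel)"
    unfolding t_pdf_def C_def[symmetric] using C
    by (subst nn_integral_cmult[symmetric]) (simp_all add: ennreal_mult')
  also have "\<dots> = ennreal (C * (sqrt (pi * v) * Gamma (v / 2) / Gamma ((v + 1) / 2)))"
    unfolding nn_integral_student_t_kernel[OF v] by (rule ennreal_mult'[symmetric]) (rule C)
  also have "C * (sqrt (pi * v) * Gamma (v / 2) / Gamma ((v + 1) / 2)) = 1"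
    using v by (simp add: C_def Gamma_real_pos[THEN less_imp_neq, THEN not_sym] mult.commute)
  finally show ?thesis by simp
qed

lemma integrable_t_pdf: "v > 0 \<Longrightarrow> integrable lborel (t_pdf v)"
  using nn_integral_t_pdf[of v] t_pdf_pos[of v]
  by (intro integrableI_nonneg) (auto intro: less_imp_le)

lemma ennreal_t_cdf:
  assumes v: "v > 0"
  shows "ennreal (t_cdf v m) = (\<integral>\<^sup>+x. ennreal (indicator {..m} x * t_pdf v x) \<partial>lborel)"
proof -
  have integrable: "integrable lborel (\<lambda>x. indicator {..m} x *\<^sub>R t_pdf v x)"
    by (rule integrable_mult_indicator) (simp_all add: integrable_t_pdf[OF v])
  have "t_cdf v m = integral\<^sup>L lborel (\<lambda>x. indicator {..m} x *\<^sub>R t_pdf v x)"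
    unfolding t_cdf_def set_lebesgue_integral_def ..
  then show ?thesis
    using nn_integral_eq_integral[OF integrable] t_pdf_pos[OF v] by (simp add: less_imp_le)
qed

lemma t_cdf_add_upper_tail:
  assumes v: "v > 0"
  shows "ennreal (t_cdf v m) + (\<integral>\<^sup>+x. ennreal (indicator {m<..} x * t_pdf v x) \<partial>lborel) = 1"
proof -
  have "ennreal (indicator {..m} x * t_pdf v x) + ennreal (indicator {m<..} x * t_pdf v x)
      = ennreal (t_pdf v x)" for x
    by (cases "x \<le> m") (auto simp: indicator_def)
  then show ?thesis
    unfolding ennreal_t_cdf[OF v]
    by (subst nn_integral_add[symmetric]) (simp_all add: nn_integral_t_pdf[OF v])
qed

lemma t_cdf_nonneg: "v > 0 \<Longrightarrow> 0 \<le> t_cdf v m"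
  unfolding t_cdf_def set_lebesgue_integral_def
  by (intro integral_nonneg_AE) (auto simp: indicator_def t_pdf_pos less_imp_le)

lemma t_cdf_le_1:
  assumes v: "v > 0"
  shows "t_cdf v m \<le> 1"
proof -
  have "ennreal (t_cdf v m) \<le> 1"
    unfolding t_cdf_add_upper_tail[OF v, of m, symmetric] by simp
  then show ?thesis using t_cdf_nonneg[OF v] by simp
qed

lemma trunc_t_pdf_nonneg: "v > 0 \<Longrightarrow> 0 \<le> trunc_t_pdf v m yi z"
  using t_cdf_nonneg t_cdf_le_1 t_pdf_pos[of v "z - m"]
  unfolding trunc_t_pdf_def by (auto intro!: divide_nonneg_nonneg)

lemma borel_measurable_trunc_t_pdf [measurable]: "trunc_t_pdf v m yi \<in> borel_measurable borel"
  unfolding trunc_t_pdf_def by measurable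

lemma nn_integral_lborel_reflect:
  fixes g :: "real \<Rightarrow> ennreal"
  assumes "g \<in> borel_measurable borel"
  shows "(\<integral>\<^sup>+z. g z \<partial>lborel) = (\<integral>\<^sup>+x. g (m - x) \<partial>lborel)"
  using nn_integral_real_affine[OF assms, of "-1" m] by simp

lemma nn_integral_divide_le_1:
  fixes f :: "'a \<Rightarrow> real"
  assumes f: "f \<in> borel_measurable M" and N: "N \<ge> 0"
    and le: "(\<integral>\<^sup>+z. ennreal (f z) \<partial>M) \<le> ennreal N"
  shows "(\<integral>\<^sup>+z. ennreal (f z / N) \<partial>M) \<le> 1"
proof -
  have "(\<integral>\<^sup>+z. ennreal (f z / N) \<partial>M) = ennreal (1 / N) * (\<integral>\<^sup>+z. ennreal (f z) \<partial>M)"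
    using N f by (subst nn_integral_cmult[symmetric]) (simp_all add: ennreal_mult'[symmetric])
  also have "\<dots> \<le> ennreal (1 / N) * ennreal N"
    by (rule mult_left_mono[OF le]) simp
  also have "\<dots> = ennreal (1 / N * N)"
    by (rule ennreal_mult'[symmetric]) (use N in simp)
  also have "\<dots> \<le> 1"
    by (cases "N = 0") simp_all
  finally show ?thesis .
qed

text \<open>The response \<open>yi\<close> is not assumed binary: any \<open>yi \<noteq> 1\<close> selects the lower truncation.\<close>
lemma nn_integral_trunc_t_pdf_le_1:
  assumes v: "v > 0"
  shows "(\<integral>\<^sup>+z. ennreal (trunc_t_pdf v m yi z) \<partial>lborel) \<le> 1"
proof (cases "yi = 1")
  case True
  have "(\<integral>\<^sup>+z. ennreal (indicator {0<..} z * t_pdf v (z - m)) \<partial>lborel)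
      = (\<integral>\<^sup>+x. ennreal (indicator {0<..} (m - x) * t_pdf v (m - x - m)) \<partial>lborel)"
    by (rule nn_integral_lborel_reflect) measurable
  also have "\<dots> \<le> ennreal (t_cdf v m)"
    unfolding ennreal_t_cdf[OF v]
    by (intro nn_integral_mono) (auto simp: indicator_def)
  finally have "(\<integral>\<^sup>+z. ennreal (indicator {0<..} z * t_pdf v (z - m) / t_cdf v m) \<partial>lborel) \<le> 1"
    by (intro nn_integral_divide_le_1 t_cdf_nonneg[OF v]) measurable
  moreover have "trunc_t_pdf v m yi z = indicator {0<..} z * t_pdf v (z - m) / t_cdf v m" for z
    using True unfolding trunc_t_pdf_def by (simp add: indicator_def)
  ultimately show ?thesis by simp
next
  case False
  have "(\<integral>\<^sup>+z. ennreal (indicator {..<0} z * t_pdf v (z - m)) \<partial>lborel)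
      = (\<integral>\<^sup>+x. ennreal (indicator {..<0} (m - x) * t_pdf v (m - x - m)) \<partial>lborel)"
    by (rule nn_integral_lborel_reflect) measurable
  also have "\<dots> = (\<integral>\<^sup>+x. ennreal (indicator {m<..} x * t_pdf v x) \<partial>lborel)"
    by (intro nn_integral_cong) (simp add: indicator_def)
  also have "\<dots> = 1 - ennreal (t_cdf v m)"
    using t_cdf_add_upper_tail[OF v, of m] by (metis ennreal_add_diff_cancel_left ennreal_neq_top)
  also have "\<dots> = ennreal (1 - t_cdf v m)"
    using ennreal_minus[OF t_cdf_nonneg[OF v], of 1 m] by simp
  finally have lower_mass: "(\<integral>\<^sup>+z. ennreal (indicator {..<0} z * t_pdf v (z - m)) \<partial>lborel)
      = ennreal (1 - t_cdf v m)" .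
  have "0 \<le> 1 - t_cdf v m"
    using t_cdf_le_1[OF v] by simp
  with lower_mass have "(\<integral>\<^sup>+z. ennreal (indicator {..<0} z * t_pdf v (z - m) / (1 - t_cdf v m)) \<partial>lborel) \<le> 1"
    by (intro nn_integral_divide_le_1) simp_all
  moreover have "trunc_t_pdf v m yi z = indicator {..<0} z * t_pdf v (z - m) / (1 - t_cdf v m)" for z
    using False unfolding trunc_t_pdf_def by (simp add: indicator_def)
  ultimately show ?thesis by simp
qed

section \<open>The latent integral\<close>

lemma gamma_pdf_nonneg: "a > 0 \<Longrightarrow> b > 0 \<Longrightarrow> 0 \<le> gamma_pdf a b t"
  unfolding gamma_pdf_def by (auto intro!: divide_nonneg_pos Gamma_real_pos)

lemma nn_integral_gamma_pdf_exp_le: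
  fixes a b c :: real
  assumes a: "a > 0" and b: "b > 0" and c: "0 \<le> c" "c \<le> b / 2"
  shows "(\<integral>\<^sup>+t. ennreal (gamma_pdf a b t * exp (c * t)) \<partial>lborel) \<le> ennreal (2 powr a)"
proof -
  define K where "K = b powr a / Gamma a"
  have K: "K \<ge> 0" using a by (simp add: K_def Gamma_real_pos less_imp_le)
  have bc: "b - c > 0" using b c by simp
  have "gamma_pdf a b t * exp (c * t) = K * (indicator {0<..} t * t powr (a - 1) * exp (- (b - c) * t))" for t
  proof (cases "t > 0")
    case True
    have "exp (- b * t) * exp (c * t) = exp (- (b - c) * t)"
      by (simp add: exp_add[symmetric] algebra_simps)
    then show ?thesis using True unfolding gamma_pdf_def K_def by (simp add: field_simps)
  qed (simp add: gamma_pdf_def)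
  then have "(\<integral>\<^sup>+t. ennreal (gamma_pdf a b t * exp (c * t)) \<partial>lborel)
      = ennreal K * (\<integral>\<^sup>+t. ennreal (indicator {0<..} t * t powr (a - 1) * exp (- (b - c) * t)) \<partial>lborel)"
    using K by (subst nn_integral_cmult[symmetric]) (simp_all add: ennreal_mult')
  also have "\<dots> = ennreal (K * (Gamma a / (b - c) powr a))"
    unfolding nn_integral_gamma_kernel[OF a bc] by (rule ennreal_mult'[symmetric]) (rule K)
  also have "K * (Gamma a / (b - c) powr a) = (b / (b - c)) powr a"
    using a b bc Gamma_real_pos[OF a, THEN less_imp_neq, THEN not_sym]
    by (simp add: K_def powr_divide less_imp_le)
  also have "(b / (b - c)) powr a \<le> 2 powr a"
    using a b bc c by (intro powr_mono2) (simp_all add: field_simps)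
  finally show ?thesis by (simp add: ennreal_leI)
qed

text \<open>One factor of the latent density of step (1), tilted by the exponential factor that
  the bound on the normal density of step (2) produces.\<close>
definition tilted_latent_pdf :: "real \<Rightarrow> real \<Rightarrow> real \<Rightarrow> real \<Rightarrow> real \<Rightarrow> real \<Rightarrow> real" where
  "tilted_latent_pdf v \<kappa> m yi l z =
     trunc_t_pdf v m yi z * gamma_pdf ((v + 1) / 2) ((v + (z - m)\<^sup>2) / 2) l * exp (\<kappa> * l * (1 + \<bar>z - m\<bar>))"

lemma borel_measurable_tilted_latent_pdf [measurable]:
  "(\<lambda>(l, z). tilted_latent_pdf v \<kappa> m yi l z) \<in> borel_measurable (lborel \<Otimes>\<^sub>M lborel)"
  "tilted_latent_pdf v \<kappa> m yi l \<in> borel_measurable borel"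
  unfolding tilted_latent_pdf_def gamma_pdf_def by measurable

lemma borel_measurable_nn_integral_tilted_latent_pdf [measurable]:
  "(\<lambda>l. \<integral>\<^sup>+z. ennreal (tilted_latent_pdf v \<kappa> m yi l z) \<partial>lborel) \<in> borel_measurable borel"
proof -
  have "(\<lambda>(l, z). ennreal (tilted_latent_pdf v \<kappa> m yi l z)) \<in> borel_measurable (borel \<Otimes>\<^sub>M lborel)"
    unfolding tilted_latent_pdf_def gamma_pdf_def by measurable
  then show ?thesis
    by (rule lborel.borel_measurable_nn_integral)
qed

lemma tilt_le_half_gamma_rate:
  fixes v \<kappa> e :: real
  assumes v: "v > 0" and \<kappa>: "0 \<le> \<kappa>" "\<kappa> \<le> min v 1 / 8"
  shows "\<kappa> * (1 + \<bar>e\<bar>) \<le> (v + e\<^sup>2) / 2 / 2"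
proof -
  have "\<bar>e\<bar> \<le> 1 + e\<^sup>2"
    using zero_le_power2[of "\<bar>e\<bar> - 1"] by (simp add: power2_diff)
  then have "1 + \<bar>e\<bar> \<le> 2 * (1 + e\<^sup>2)"
    using zero_le_power2[of e] by (smt (verit))
  then have "\<kappa> * (1 + \<bar>e\<bar>) \<le> min v 1 / 8 * (2 * (1 + e\<^sup>2))"
    using \<kappa> by (intro mult_mono) auto
  also have "\<dots> = (min v 1 + min v 1 * e\<^sup>2) / 4"
    by (simp add: algebra_simps)
  also have "\<dots> \<le> (v + e\<^sup>2) / 4"
    using mult_left_le_one_le[of "e\<^sup>2" "min v 1"] v by simp
  finally show ?thesis by simp
qed

lemma nn_integral_tilted_latent_pdf_le:
  assumes v: "v > 0" and \<kappa>: "0 \<le> \<kappa>" "\<kappa> \<le> min v 1 / 8"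
  shows "(\<integral>\<^sup>+l. (\<integral>\<^sup>+z. ennreal (tilted_latent_pdf v \<kappa> m yi l z) \<partial>lborel) \<partial>lborel)
       \<le> ennreal (2 powr ((v + 1) / 2))"
proof -
  have "(\<integral>\<^sup>+t. ennreal (tilted_latent_pdf v \<kappa> m yi t z) \<partial>lborel)
      \<le> ennreal (trunc_t_pdf v m yi z) * ennreal (2 powr ((v + 1) / 2))" for z
  proof -
    define b where "b = (v + (z - m)\<^sup>2) / 2"
    have b: "b > 0" using v by (simp add: b_def add_pos_nonneg)
    have "(\<integral>\<^sup>+t. ennreal (tilted_latent_pdf v \<kappa> m yi t z) \<partial>lborel)
        = ennreal (trunc_t_pdf v m yi z)
          * (\<integral>\<^sup>+t. ennreal (gamma_pdf ((v + 1) / 2) b t * exp (\<kappa> * (1 + \<bar>z - m\<bar>) * t)) \<partial>lborel)"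
      unfolding tilted_latent_pdf_def b_def[symmetric] using trunc_t_pdf_nonneg[OF v]
      by (subst nn_integral_cmult[symmetric]) (simp_all add: gamma_pdf_def ennreal_mult' algebra_simps)
    also have "\<dots> \<le> ennreal (trunc_t_pdf v m yi z) * ennreal (2 powr ((v + 1) / 2))"
      using v b \<kappa> tilt_le_half_gamma_rate[OF v \<kappa>, of "z - m"] unfolding b_def
      by (intro mult_left_mono nn_integral_gamma_pdf_exp_le) simp_all
    finally show ?thesis .
  qed
  then have "(\<integral>\<^sup>+z. (\<integral>\<^sup>+t. ennreal (tilted_latent_pdf v \<kappa> m yi t z) \<partial>lborel) \<partial>lborel)
      \<le> (\<integral>\<^sup>+z. ennreal (trunc_t_pdf v m yi z) \<partial>lborel) * ennreal (2 powr ((v + 1) / 2))"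
    by (subst nn_integral_multc[symmetric]) (simp_all add: nn_integral_mono)
  also have "\<dots> \<le> ennreal (2 powr ((v + 1) / 2))"
    using mult_right_mono[OF nn_integral_trunc_t_pdf_le_1[OF v], of "ennreal (2 powr ((v + 1) / 2))" m yi]
    by simp
  finally show ?thesis
    by (subst lborel_pair.Fubini') (simp_all add: case_prod_unfold)
qed

lemma nn_integral_lborel_vec_prod:
  fixes f :: "'n::finite \<Rightarrow> real \<Rightarrow> ennreal"
  assumes [measurable]: "\<And>i. f i \<in> borel_measurable borel"
  shows "(\<integral>\<^sup>+x. (\<Prod>i\<in>UNIV. f i (x $ i)) \<partial>(lborel :: (real^'n) measure))
       = (\<Prod>i\<in>UNIV. \<integral>\<^sup>+t. f i t \<partial>lborel)"
proof -
  define F where "F b = f (SOME i. axis i 1 = b)" for b :: "real^'n"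
  have F_axis: "F (axis i 1) = f i" for i
    unfolding F_def by (rule arg_cong[where f = f]) (auto simp: axis_eq_axis)
  have Basis: "(Basis :: (real^'n) set) = (\<lambda>i. axis i 1) ` UNIV"
    by (auto simp: Basis_vec_def)
  have inj: "inj (\<lambda>i::'n. axis i (1::real))"
    by (auto simp: inj_def axis_eq_axis)
  have "(\<integral>\<^sup>+x. (\<Prod>b\<in>Basis. F b (x \<bullet> b)) \<partial>(lborel :: (real^'n) measure)) = (\<Prod>b\<in>Basis. \<integral>\<^sup>+x. F b x \<partial>lborel)"
    by (rule nn_integral_lborel_prod) (auto simp: Basis F_axis)
  then show ?thesis
    unfolding Basis by (simp add: prod.reindex[OF inj] F_axis cart_eq_inner_axis)
qed

lemma nn_integral_exp_neg_abs_finite: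
  fixes c a :: real
  assumes c: "c > 0"
  shows "(\<integral>\<^sup>+x. ennreal (exp (- c * \<bar>x - a\<bar>)) \<partial>lborel) < \<infinity>"
proof -
  define g where "g x = ennreal (indicator {0<..} x * x powr (1 - 1) * exp (- c * x))" for x :: real
  have [measurable]: "g \<in> borel_measurable borel"
    unfolding g_def by measurable
  have "(\<integral>\<^sup>+x. ennreal (exp (- c * \<bar>x - a\<bar>)) \<partial>lborel) = (\<integral>\<^sup>+x. ennreal (exp (- c * \<bar>x\<bar>)) \<partial>lborel)"
    using nn_integral_real_affine[of "\<lambda>x. ennreal (exp (- c * \<bar>x - a\<bar>))" 1 a] by simp
  also have "\<dots> \<le> (\<integral>\<^sup>+x. g x + g (- x) \<partial>lborel)"
    using AE_lborel_singleton[of 0]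
    by (intro nn_integral_mono_AE) (auto elim!: eventually_mono simp: g_def indicator_def)
  also have "\<dots> = (\<integral>\<^sup>+x. g x \<partial>lborel) + (\<integral>\<^sup>+x. g (- x) \<partial>lborel)"
    by (rule nn_integral_add) measurable
  also have "(\<integral>\<^sup>+x. g (- x) \<partial>lborel) = (\<integral>\<^sup>+x. g x \<partial>lborel)"
    using nn_integral_lborel_reflect[of g 0] by simp
  also have "(\<integral>\<^sup>+x. g x \<partial>lborel) = ennreal (Gamma 1 / c powr 1)"
    unfolding g_def by (rule nn_integral_gamma_kernel) (use c in auto)
  finally show ?thesis
    by (rule le_less_trans) (simp flip: ennreal_plus)
qed

lemma nn_integral_exp_neg_norm_finite:
  fixes a :: "real^'p" and g :: real
  assumes g: "g > 0"
  shows "(\<integral>\<^sup>+b. ennreal (exp (- g * norm (b - a))) \<partial>lborel) < \<infinity>"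
proof -
  define c where "c = g / real CARD('p)"
  have c: "c > 0" using g by (simp add: c_def)
  have "exp (- g * norm (b - a)) \<le> (\<Prod>j\<in>UNIV. exp (- c * \<bar>b $ j - a $ j\<bar>))" for b :: "real^'p"
  proof -
    have "(\<Sum>j\<in>UNIV. \<bar>b $ j - a $ j\<bar>) \<le> (\<Sum>j\<in>(UNIV::'p set). norm (b - a))"
      by (intro sum_mono) (metis component_le_norm_cart vector_minus_component)
    then have "c * (\<Sum>j\<in>UNIV. \<bar>b $ j - a $ j\<bar>) \<le> g * norm (b - a)"
      unfolding c_def using g by (simp add: field_simps)
    then show ?thesis
      by (simp add: exp_sum[symmetric] sum_distrib_left[symmetric] sum_negf)
  qed
  then have "(\<integral>\<^sup>+b. ennreal (exp (- g * norm (b - a))) \<partial>lborel)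
      \<le> (\<integral>\<^sup>+b. (\<Prod>j\<in>UNIV. ennreal (exp (- c * \<bar>b $ j - a $ j\<bar>))) \<partial>lborel)"
    by (intro nn_integral_mono) (simp add: prod_ennreal ennreal_leI)
  also have "\<dots> = (\<Prod>j\<in>UNIV. \<integral>\<^sup>+t. ennreal (exp (- c * \<bar>t - a $ j\<bar>)) \<partial>lborel)"
    by (rule nn_integral_lborel_vec_prod) measurable
  also have "\<dots> < \<infinity>"
    using nn_integral_exp_neg_abs_finite[OF c]
    by (simp add: ennreal_prod_eq_top less_top[symmetric])
  finally show ?thesis .
qed

section \<open>Matrix estimates\<close>

lemma inner_transpose_mult: "u \<bullet> (transpose X *v v) = (X *v u) \<bullet> (v :: real^'n)"
  by (metis dot_lmul_matrix inner_commute transpose_matrix_vector)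

lemma diag_mat_mult_vec: "diag_mat l *v v = (\<chi> i. l $ i * v $ i)"
  unfolding diag_mat_def matrix_vector_mult_def vec_eq_iff
  by (simp add: if_distrib[of "\<lambda>x. x * _"] sum.delta cong: if_cong)

lemma entry_abs_le_sum_abs: "\<bar>M $ i $ j\<bar> \<le> (\<Sum>i\<in>UNIV. \<Sum>j\<in>UNIV. \<bar>(M :: real^'m^'n) $ i $ j\<bar>)"
proof -
  have "\<bar>M $ i $ j\<bar> \<le> (\<Sum>j\<in>UNIV. \<bar>M $ i $ j\<bar>)"
    by (rule member_le_sum) auto
  also have "\<dots> \<le> (\<Sum>i\<in>UNIV. \<Sum>j\<in>UNIV. \<bar>M $ i $ j\<bar>)"
    by (rule member_le_sum[where f = "\<lambda>i. \<Sum>j\<in>UNIV. \<bar>M $ i $ j\<bar>"]) (auto intro: sum_nonneg)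
  finally show ?thesis .
qed

lemma norm_matrix_vector_mult_le:
  fixes A :: "real^'m^'n"
  assumes B: "\<And>j k. \<bar>A $ j $ k\<bar> \<le> B"
  shows "norm (A *v x) \<le> real CARD('n) * real CARD('m) * B * norm x"
proof -
  have "\<bar>(A *v x) $ j\<bar> \<le> real CARD('m) * B * norm x" for j
  proof -
    have B0: "0 \<le> B" using B order.trans[OF abs_ge_zero] by blast
    have "\<bar>(A *v x) $ j\<bar> \<le> (\<Sum>k\<in>UNIV. \<bar>A $ j $ k\<bar> * \<bar>x $ k\<bar>)"
      unfolding matrix_vector_mult_def by (simp add: sum_abs[THEN order_trans] abs_mult)
    also have "\<dots> \<le> (\<Sum>k\<in>(UNIV::'m set). B * norm x)"
      by (intro sum_mono mult_mono B component_le_norm_cart B0) simp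
    finally show ?thesis by simp
  qed
  then have "(\<Sum>j\<in>UNIV. \<bar>(A *v x) $ j\<bar>) \<le> (\<Sum>j\<in>(UNIV::'n set). real CARD('m) * B * norm x)"
    by (intro sum_mono)
  then show ?thesis
    using norm_le_l1_cart[of "A *v x"] by simp
qed

lemma abs_det_le:
  fixes A :: "real^'n^'n"
  assumes B: "\<And>j k. \<bar>A $ j $ k\<bar> \<le> B"
  shows "\<bar>det A\<bar> \<le> fact CARD('n) * B ^ CARD('n)"
proof -
  have "\<bar>det A\<bar> \<le> (\<Sum>p | p permutes (UNIV::'n set). \<bar>of_int (sign p) * (\<Prod>i\<in>UNIV. A $ i $ p i)\<bar>)"
    unfolding det_def by (rule sum_abs)
  also have "\<dots> \<le> (\<Sum>p | p permutes (UNIV::'n set). B ^ CARD('n))"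
  proof (rule sum_mono)
    fix p
    have "\<bar>of_int (sign p) * (\<Prod>i\<in>UNIV. A $ i $ p i)\<bar> = (\<Prod>i\<in>UNIV. \<bar>A $ i $ p i\<bar>)"
      by (simp add: abs_mult abs_prod sign_def)
    also have "\<dots> \<le> (\<Prod>i\<in>(UNIV::'n set). B)"
      by (intro prod_mono) (simp add: B)
    finally show "\<bar>of_int (sign p) * (\<Prod>i\<in>UNIV. A $ i $ p i)\<bar> \<le> B ^ CARD('n)"
      by simp
  qed
  also have "\<dots> = fact CARD('n) * B ^ CARD('n)"
    by (simp add: card_permutations)
  finally show ?thesis .
qed

lemma psd_form_cauchy_schwarz:
  fixes A :: "real^'p^'p"
  assumes sym: "\<And>u w. u \<bullet> (A *v w) = w \<bullet> (A *v u)" and psd: "\<And>u. 0 \<le> u \<bullet> (A *v u)"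
  shows "(u \<bullet> (A *v w))\<^sup>2 \<le> (u \<bullet> (A *v u)) * (w \<bullet> (A *v w))"
proof -
  define a b c where "a = u \<bullet> (A *v u)" and "b = u \<bullet> (A *v w)" and "c = w \<bullet> (A *v w)"
  have expand: "0 \<le> a + 2 * t * b + t\<^sup>2 * c" for t
  proof -
    have "(u + t *\<^sub>R w) \<bullet> (A *v (u + t *\<^sub>R w)) = a + t * b + t * (w \<bullet> (A *v u)) + t\<^sup>2 * c"
      unfolding a_def b_def c_def
      by (simp add: matrix_vector_right_distrib matrix_vector_mult_scaleR inner_add_left inner_add_right
          power2_eq_square algebra_simps)
    then show ?thesis
      using psd[of "u + t *\<^sub>R w"] sym[of w u] unfolding b_def by simp
  qed
  have "b\<^sup>2 \<le> a * c"
  proof (cases "c = 0")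
    case True
    have "b = 0"
    proof (rule ccontr)
      assume "b \<noteq> 0"
      then show False
        using expand[of "- (a + 1) / (2 * b)"] True by (simp add: field_simps)
    qed
    then show ?thesis using True by simp
  next
    case False
    then have "c > 0" using psd[of w] unfolding c_def by simp
    moreover have "0 \<le> a + 2 * (- b / c) * b + (- b / c)\<^sup>2 * c"
      by (rule expand)
    ultimately show ?thesis
      by (simp add: power2_eq_square field_simps)
  qed
  then show ?thesis unfolding a_def b_def c_def .
qed

text \<open>Cauchy-Schwarz for the semi-inner product of \<open>A\<close>, applied to \<open>d\<close> and \<open>A d\<close>.\<close>
lemma norm_mult_squared_le_form:
  fixes A :: "real^'p^'p"
  assumes sym: "\<And>u w. u \<bullet> (A *v w) = w \<bullet> (A *v u)" and psd: "\<And>u. 0 \<le> u \<bullet> (A *v u)"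
    and upper: "\<And>u. u \<bullet> (A *v u) \<le> c * (norm u)\<^sup>2"
  shows "(norm (A *v d))\<^sup>2 \<le> c * (d \<bullet> (A *v d))"
proof -
  define w where "w = A *v d"
  have c_nonneg: "c \<ge> 0"
  proof -
    obtain e :: "real^'p" where "e \<in> Basis" using nonempty_Basis by blast
    then show ?thesis using upper[of e] psd[of e] by simp
  qed
  have "((norm w)\<^sup>2)\<^sup>2 \<le> (d \<bullet> (A *v d)) * (w \<bullet> (A *v w))"
    using psd_form_cauchy_schwarz[OF sym psd, of d w] sym[of d w]
    unfolding w_def by (simp add: power2_norm_eq_inner)
  also have "\<dots> \<le> (d \<bullet> (A *v d)) * (c * (norm w)\<^sup>2)"
    by (intro mult_left_mono upper psd)
  finally have "(norm w)\<^sup>2 * (norm w)\<^sup>2 \<le> (c * (d \<bullet> (A *v d))) * (norm w)\<^sup>2"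
    by (simp add: power2_eq_square algebra_simps)
  then show ?thesis
    using c_nonneg psd[of d] mult_right_le_imp_le[of "(norm w)\<^sup>2" "(norm w)\<^sup>2"]
    unfolding w_def[symmetric] by (cases "w = 0") auto
qed

lemma pos_def_coercive:
  fixes S :: "real^'p^'p"
  assumes "pos_def S"
  obtains s where "s > 0" "\<And>u. s * (norm u)\<^sup>2 \<le> u \<bullet> (S *v u)"
proof -
  define f where "f u = u \<bullet> (S *v u)" for u :: "real^'p"
  have "continuous_on (sphere 0 1) f"
    unfolding f_def by (intro continuous_on_inner continuous_on_id matrix_vector_mult_linear_continuous_on)
  moreover obtain e :: "real^'p" where "e \<in> Basis" using nonempty_Basis by blast
  then have "sphere (0::real^'p) 1 \<noteq> {}" by (metis norm_Basis mem_sphere_0 empty_iff)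
  ultimately obtain u0 where u0: "u0 \<in> sphere 0 1" and min: "\<And>y. y \<in> sphere 0 1 \<Longrightarrow> f u0 \<le> f y"
    using continuous_attains_inf[OF compact_sphere] by blast
  have "u0 \<noteq> 0"
    using u0 by auto
  then have "f u0 > 0"
    using assms unfolding pos_def_def f_def by blast
  moreover have "f u0 * (norm u)\<^sup>2 \<le> f u" for u
  proof (cases "u = 0")
    case False
    define y where "y = (1 / norm u) *\<^sub>R u"
    have "f u = (norm u)\<^sup>2 * f y"
      using False unfolding f_def y_def by (simp add: matrix_vector_mult_scaleR power2_eq_square)
    moreover have "f u0 \<le> f y"
      using min False by (simp add: y_def)
    ultimately show ?thesis by (simp add: mult.commute mult_right_mono)
  qed (simp add: f_def)
  ultimately show ?thesis
    using that unfolding f_def by blast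
qed

section \<open>The precision matrix of step (2)\<close>

definition robit_precision :: "real^'p^'n \<Rightarrow> real^'n \<Rightarrow> real^'p^'p \<Rightarrow> real^'p^'p" where
  "robit_precision X l Sa = transpose X ** diag_mat l ** X + Sa"

lemma robit_precision_mult:
  "robit_precision X l Sa *v u = transpose X *v (diag_mat l *v (X *v u)) + Sa *v u"
  unfolding robit_precision_def
  by (simp add: matrix_vector_mult_add_rdistrib matrix_vector_mul_assoc matrix_mul_assoc)

lemma robit_precision_form:
  "u \<bullet> (robit_precision X l Sa *v w)
     = (\<Sum>i\<in>UNIV. l $ i * (X *v u) $ i * (X *v w) $ i) + u \<bullet> (Sa *v w)"
  unfolding robit_precision_mult inner_add_right inner_transpose_mult diag_mat_mult_vec
  by (simp add: inner_vec_def mult.commute mult.left_commute)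

lemma robit_precision_symmetric:
  assumes "transpose Sa = Sa"
  shows "u \<bullet> (robit_precision X l Sa *v w) = w \<bullet> (robit_precision X l Sa *v u)"
proof -
  have "u \<bullet> (Sa *v w) = w \<bullet> (Sa *v u)"
    using inner_transpose_mult[of w Sa u] assms by (simp add: inner_commute)
  then show ?thesis
    unfolding robit_precision_form by (simp add: mult.commute mult.left_commute)
qed

lemma robit_precision_form_ge:
  assumes "\<forall>i. 0 \<le> l $ i"
  shows "u \<bullet> (Sa *v u) \<le> u \<bullet> (robit_precision X l Sa *v u)"
  unfolding robit_precision_form using assms
  by (auto simp: mult.assoc intro!: sum_nonneg mult_nonneg_nonneg[OF _ zero_le_square])

lemma robit_precision_mult_matrix_inv:
  assumes "pos_def Sa" and "\<forall>i. 0 \<le> l $ i"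
  shows "robit_precision X l Sa *v (matrix_inv (robit_precision X l Sa) *v y) = y"
proof -
  let ?Q = "robit_precision X l Sa"
  have kernel_trivial: "u = 0" if "?Q *v u = 0" for u
  proof (rule ccontr)
    assume "u \<noteq> 0"
    then have "0 < u \<bullet> (Sa *v u)"
      using assms(1) unfolding pos_def_def by blast
    also have "\<dots> \<le> u \<bullet> (?Q *v u)"
      by (rule robit_precision_form_ge[OF assms(2)])
    finally show False
      using that by simp
  qed
  have "inj ((*v) ?Q)"
  proof (rule injI)
    fix u w
    assume "?Q *v u = ?Q *v w"
    then have "?Q *v (u - w) = 0"
      by (simp add: matrix_vector_mult_diff_distrib)
    then show "u = w"
      using kernel_trivial[of "u - w"] by simp
  qed
  then have "invertible ?Q"
    using matrix_left_invertible_injective invertible_left_inverse by blast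
  then have "?Q ** matrix_inv ?Q = mat 1"
    unfolding invertible_def matrix_inv_def by (rule someI2_ex) auto
  then show ?thesis
    by (simp add: matrix_vector_mul_assoc)
qed

lemma robit_precision_entries_bound:
  fixes X :: "real^'p^'n" and Sa :: "real^'p^'p"
  obtains A where "A > 0"
    "\<And>l j j'. \<forall>i. 0 \<le> l $ i \<Longrightarrow> \<bar>robit_precision X l Sa $ j $ j'\<bar> \<le> A * (1 + (\<Sum>i\<in>UNIV. l $ i))"
proof
  define mx where "mx = (\<Sum>i\<in>UNIV. \<Sum>j\<in>UNIV. \<bar>X $ i $ j\<bar>)"
  define ms where "ms = (\<Sum>i\<in>UNIV. \<Sum>j\<in>UNIV. \<bar>Sa $ i $ j\<bar>)"
  have mx: "\<bar>X $ i $ j\<bar> \<le> mx" and ms: "\<bar>Sa $ j $ k\<bar> \<le> ms" for i j k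
    unfolding mx_def ms_def by (rule entry_abs_le_sum_abs)+
  have mx0: "0 \<le> mx" and ms0: "0 \<le> ms"
    unfolding mx_def ms_def by (simp_all add: sum_nonneg)
  show "mx\<^sup>2 + ms + 1 > 0"
    using ms0 by (simp add: add_nonneg_pos)
  fix l :: "real^'n" and j k
  assume l: "\<forall>i. 0 \<le> l $ i"
  have entry: "robit_precision X l Sa $ j $ k = (\<Sum>i\<in>UNIV. X $ i $ j * l $ i * X $ i $ k) + Sa $ j $ k"
    unfolding robit_precision_def diag_mat_def matrix_matrix_mult_def transpose_def
    by (simp add: sum_distrib_right if_distrib cong: if_cong)
  have "\<bar>X $ i $ j * l $ i * X $ i $ k\<bar> \<le> mx\<^sup>2 * l $ i" for i
  proof -
    have "\<bar>X $ i $ j * l $ i * X $ i $ k\<bar> = (\<bar>X $ i $ j\<bar> * \<bar>X $ i $ k\<bar>) * l $ i"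
      using l by (simp add: abs_mult)
    also have "\<dots> \<le> (mx * mx) * l $ i"
      using l mx mx0 by (intro mult_right_mono mult_mono) auto
    finally show ?thesis by (simp add: power2_eq_square)
  qed
  then have "\<bar>\<Sum>i\<in>UNIV. X $ i $ j * l $ i * X $ i $ k\<bar> \<le> mx\<^sup>2 * (\<Sum>i\<in>UNIV. l $ i)"
    unfolding sum_distrib_left by (intro sum_abs[THEN order_trans] sum_mono)
  then have "\<bar>robit_precision X l Sa $ j $ k\<bar> \<le> mx\<^sup>2 * (\<Sum>i\<in>UNIV. l $ i) + ms"
    unfolding entry using ms[of j k] by linarith
  also have "\<dots> \<le> (mx\<^sup>2 + ms + 1) * (1 + (\<Sum>i\<in>UNIV. l $ i))"
    using l ms0 by (simp add: algebra_simps sum_nonneg)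
  finally show "\<bar>robit_precision X l Sa $ j $ k\<bar> \<le> (mx\<^sup>2 + ms + 1) * (1 + (\<Sum>i\<in>UNIV. l $ i))" .
qed

lemma robit_precision_norm_mult_squared_le:
  fixes X :: "real^'p^'n" and Sa :: "real^'p^'p"
  assumes pd: "pos_def Sa"
  obtains C where "C > 0"
    "\<And>l d. \<forall>i. 0 \<le> l $ i \<Longrightarrow> (norm (robit_precision X l Sa *v d))\<^sup>2
       \<le> C * (1 + (\<Sum>i\<in>UNIV. l $ i)) * (d \<bullet> (robit_precision X l Sa *v d))"
proof -
  obtain A where A: "A > 0"
    and entries: "\<And>l j j'. \<forall>i. 0 \<le> l $ i \<Longrightarrow> \<bar>robit_precision X l Sa $ j $ j'\<bar> \<le> A * (1 + (\<Sum>i\<in>UNIV. l $ i))"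
    using robit_precision_entries_bound[of X Sa] by blast
  define C where "C = real CARD('p) * real CARD('p) * A"
  show ?thesis
  proof
    show "C > 0"
      using A by (simp add: C_def)
    fix l :: "real^'n" and d
    assume l: "\<forall>i. 0 \<le> l $ i"
    let ?Q = "robit_precision X l Sa"
    have upper: "u \<bullet> (?Q *v u) \<le> C * (1 + (\<Sum>i\<in>UNIV. l $ i)) * (norm u)\<^sup>2" for u
    proof -
      have "u \<bullet> (?Q *v u) \<le> norm u * norm (?Q *v u)"
        by (rule norm_cauchy_schwarz)
      also have "\<dots> \<le> norm u * (C * (1 + (\<Sum>i\<in>UNIV. l $ i)) * norm u)"
        using norm_matrix_vector_mult_le[OF entries[OF l], of u]
        by (intro mult_left_mono) (simp_all add: C_def mult.assoc)
      finally show ?thesis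
        by (simp add: power2_eq_square algebra_simps)
    qed
    have psd: "0 \<le> u \<bullet> (?Q *v u)" for u
    proof -
      have "0 \<le> u \<bullet> (Sa *v u)"
        using pd unfolding pos_def_def by (cases "u = 0") (auto intro: less_imp_le)
      then show ?thesis
        using robit_precision_form_ge[OF l, of u Sa X] by linarith
    qed
    show "(norm (?Q *v d))\<^sup>2 \<le> C * (1 + (\<Sum>i\<in>UNIV. l $ i)) * (d \<bullet> (?Q *v d))"
      using pd unfolding pos_def_def
      by (intro norm_mult_squared_le_form psd upper robit_precision_symmetric) simp
  qed
qed

definition robit_mean :: "real^'p^'n \<Rightarrow> real^'p \<Rightarrow> real^'p^'p \<Rightarrow> real^'n \<Rightarrow> real^'n \<Rightarrow> real^'p" where
  "robit_mean X ba Sa l z =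
     matrix_inv (robit_precision X l Sa) *v (transpose X *v (diag_mat l *v z) + Sa *v ba)"

lemma robit_beta_pdf_eq:
  "robit_beta_pdf X ba Sa l z b = mvn_prec_pdf (robit_mean X ba Sa l z) (robit_precision X l Sa) b"
  unfolding robit_beta_pdf_def robit_mean_def robit_precision_def Let_def ..

lemma robit_precision_mult_centered:
  assumes "pos_def Sa" and "\<forall>i. 0 \<le> l $ i"
  shows "robit_precision X l Sa *v (b - robit_mean X ba Sa l z)
       = transpose X *v (diag_mat l *v (X *v b - z)) + Sa *v (b - ba)"
  using robit_precision_mult_matrix_inv[OF assms]
  unfolding robit_mean_def
  by (simp add: matrix_vector_mult_diff_distrib robit_precision_mult algebra_simps)

lemma norm_transpose_diag_mult_le:
  fixes X :: "real^'p^'n"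
  assumes M: "\<And>i j. \<bar>X $ i $ j\<bar> \<le> M" and l: "\<forall>i. 0 \<le> l $ i"
  shows "norm (transpose X *v (diag_mat l *v e)) \<le> real CARD('p) * M * (\<Sum>i\<in>UNIV. l $ i * \<bar>e $ i\<bar>)"
proof -
  have "\<bar>(transpose X *v (diag_mat l *v e)) $ j\<bar> \<le> M * (\<Sum>i\<in>UNIV. l $ i * \<bar>e $ i\<bar>)" for j
  proof -
    have "\<bar>(transpose X *v (diag_mat l *v e)) $ j\<bar> \<le> (\<Sum>i\<in>UNIV. \<bar>X $ i $ j\<bar> * (l $ i * \<bar>e $ i\<bar>))"
      unfolding diag_mat_mult_vec using l
      by (simp add: matrix_vector_mult_def transpose_def sum_abs[THEN order_trans] abs_mult)
    also have "\<dots> \<le> (\<Sum>i\<in>UNIV. M * (l $ i * \<bar>e $ i\<bar>))"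
      using l M by (intro sum_mono mult_right_mono) auto
    finally show ?thesis by (simp add: sum_distrib_left)
  qed
  then have "(\<Sum>j\<in>UNIV. \<bar>(transpose X *v (diag_mat l *v e)) $ j\<bar>)
      \<le> (\<Sum>j\<in>(UNIV::'p set). M * (\<Sum>i\<in>UNIV. l $ i * \<bar>e $ i\<bar>))"
    by (intro sum_mono)
  then show ?thesis
    using norm_le_l1_cart[of "transpose X *v (diag_mat l *v e)"] by simp
qed

lemma norm_transpose_diag_mult_add_ge:
  fixes X :: "real^'p^'n" and S :: "real^'p^'p"
  assumes coercive: "\<And>u. s * (norm u)\<^sup>2 \<le> u \<bullet> (S *v u)"
    and M: "\<And>i j. \<bar>X $ i $ j\<bar> \<le> M" and l: "\<forall>i. 0 \<le> l $ i"
  shows "s * norm w - real CARD('p) * M * (\<Sum>i\<in>UNIV. l $ i * \<bar>e $ i\<bar>)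
       \<le> norm (transpose X *v (diag_mat l *v e) + S *v w)"
proof -
  have "s * (norm w)\<^sup>2 \<le> norm w * norm (S *v w)"
    using coercive[of w] norm_cauchy_schwarz[of w "S *v w"] by linarith
  then have "s * norm w \<le> norm (S *v w)"
    by (cases "w = 0") (simp_all add: power2_eq_square mult.commute)
  moreover have "norm (S *v w)
      \<le> norm (transpose X *v (diag_mat l *v e) + S *v w) + norm (transpose X *v (diag_mat l *v e))"
    by (metis add_diff_cancel_left' norm_triangle_ineq4)
  ultimately show ?thesis
    using norm_transpose_diag_mult_le[OF M l, of e] by linarith
qed

section \<open>Bounding the normal density of step (2)\<close>

lemma power_le_fact_mult_exp:
  fixes y :: real
  assumes "0 \<le> y"
  shows "y ^ n \<le> fact n * exp y"
proof -
  have "(\<Sum>k\<in>{n}. y ^ k /\<^sub>R fact k) \<le> (\<Sum>k. y ^ k /\<^sub>R fact k)"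
    by (rule sum_le_suminf[OF summable_exp_generic]) (use assms in auto)
  then show ?thesis
    by (simp add: exp_def field_simps)
qed

lemma sqrt_le_1_plus_abs: "sqrt x \<le> 1 + \<bar>x\<bar>"
proof -
  have "sqrt \<bar>x\<bar> \<le> 1 + \<bar>x\<bar>"
    using zero_le_power2[of "sqrt \<bar>x\<bar> - 1"] by (simp add: power2_diff)
  then show ?thesis
    using real_sqrt_le_mono[OF abs_ge_self[of x]] by linarith
qed

lemma sqrt_det_robit_precision_bound:
  fixes X :: "real^'p^'n" and Sa :: "real^'p^'p" and k :: real
  assumes k: "k > 0"
  obtains C where "C \<ge> 0"
    "\<And>l. \<forall>i. 0 \<le> l $ i \<Longrightarrow> sqrt (det (robit_precision X l Sa)) \<le> C * exp (k * (1 + (\<Sum>i\<in>UNIV. l $ i)))"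
proof -
  obtain A where A: "A > 0"
    and entries: "\<And>l j j'. \<forall>i. 0 \<le> l $ i \<Longrightarrow> \<bar>robit_precision X l Sa $ j $ j'\<bar> \<le> A * (1 + (\<Sum>i\<in>UNIV. l $ i))"
    using robit_precision_entries_bound[of X Sa] by blast
  define p where "p = CARD('p)"
  define C where "C = (1 + fact p * A ^ p) * (1 / k) ^ p * fact p"
  show ?thesis
  proof
    show "C \<ge> 0"
      using A k by (simp add: C_def)
    fix l :: "real^'n"
    assume l: "\<forall>i. 0 \<le> l $ i"
    define L where "L = 1 + (\<Sum>i\<in>UNIV. l $ i)"
    have L: "L \<ge> 1"
      using l by (simp add: L_def sum_nonneg)
    have "sqrt (det (robit_precision X l Sa)) \<le> 1 + fact p * (A * L) ^ p"
      using abs_det_le[OF entries[OF l]] sqrt_le_1_plus_abs[of "det (robit_precision X l Sa)"]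
      unfolding p_def L_def by linarith
    also have "\<dots> \<le> (1 + fact p * A ^ p) * L ^ p"
      using L by (simp add: power_mult_distrib distrib_right one_le_power)
    also have "L ^ p = (1 / k) ^ p * (k * L) ^ p"
      using k by (simp add: power_mult_distrib[symmetric])
    also have "(k * L) ^ p \<le> fact p * exp (k * L)"
      using k L by (intro power_le_fact_mult_exp) simp
    finally show "sqrt (det (robit_precision X l Sa)) \<le> C * exp (k * (1 + (\<Sum>i\<in>UNIV. l $ i)))"
      unfolding C_def L_def using A k by (simp add: mult_left_mono mult.assoc)
  qed
qed

text \<open>Either the residual \<open>R\<close> is large compared with \<open>W\<close>, and then so is the form \<open>q\<close>,
  or \<open>W\<close> is controlled by \<open>L\<close> or by \<open>E\<close>.\<close>
lemma linear_le_quadratic_penalty: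
  fixes s B C k W L E R q :: real
  assumes pos: "s > 0" "B > 0" "C > 0" "k > 0" and nonneg: "W \<ge> 0" "L \<ge> 0" "E \<ge> 0"
    and R: "s * W - B * E \<le> R" and q: "R\<^sup>2 \<le> C * (1 + L) * q"
  shows "min k (min (k * s / (2 * B)) (s\<^sup>2 / (8 * C))) * W \<le> q / 2 + k * (1 + L + E)"
proof -
  define g where "g = min k (min (k * s / (2 * B)) (s\<^sup>2 / (8 * C)))"
  have g: "0 \<le> g" "g \<le> k" "g \<le> k * s / (2 * B)" "g \<le> s\<^sup>2 / (8 * C)"
    using pos by (simp_all add: g_def)
  have "0 \<le> C * (1 + L) * q"
    using q zero_le_power2[of R] by linarith
  moreover have "0 < C * (1 + L)"
    using pos nonneg by simp
  ultimately have q0: "0 \<le> q"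
    by (simp add: zero_le_mult_iff)
  have k_distrib: "k * (1 + L + E) = k + k * L + k * E" and "0 \<le> k * L" "0 \<le> k * E"
    using pos nonneg by (simp_all add: algebra_simps)
  consider "s * W \<le> 2 * B * E" | "W \<le> 1 + L" | "2 * B * E < s * W" "1 + L < W"
    by linarith
  then have "g * W \<le> q / 2 + k * (1 + L + E)"
  proof cases
    case 1
    then have "g * W \<le> k * s / (2 * B) * (2 * B * E / s)"
      using g nonneg pos by (intro mult_mono) (simp_all add: field_simps)
    also have "\<dots> = k * E"
      using pos by (simp add: field_simps)
    finally show ?thesis
      using q0 pos k_distrib \<open>0 \<le> k * L\<close> by linarith
  next
    case 2
    then have "g * W \<le> k * (1 + L)"
      using g nonneg by (intro mult_mono) simp_all
    then show ?thesis
      using q0 pos k_distrib \<open>0 \<le> k * E\<close> by (simp add: algebra_simps)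
  next
    case 3
    then have "(s * W / 2)\<^sup>2 \<le> R\<^sup>2"
      using R pos nonneg by (intro power_mono) simp_all
    also have "\<dots> \<le> C * W * q"
      using q 3 q0 pos by (smt (verit) mult_right_mono mult_left_mono)
    finally have "s\<^sup>2 * W * W \<le> (4 * C * q) * W"
      by (simp add: power2_eq_square field_simps)
    then have "s\<^sup>2 * W \<le> 4 * C * q"
      using 3 nonneg by (simp add: mult_le_cancel_right)
    then have "s\<^sup>2 / (8 * C) * W \<le> q / 2"
      using pos by (simp add: field_simps)
    then show ?thesis
      using mult_right_mono[OF g(4) nonneg(1)] pos k_distrib \<open>0 \<le> k * L\<close> \<open>0 \<le> k * E\<close>
      by linarith
  qed
  then show ?thesis unfolding g_def .
qed

lemma robit_precision_form_bound:
  fixes X :: "real^'p^'n" and Sa :: "real^'p^'p" and ba :: "real^'p" and k :: real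
  assumes pd: "pos_def Sa" and k: "k > 0"
  obtains g where "g > 0"
    "\<And>b l z. \<forall>i. 0 \<le> l $ i \<Longrightarrow>
       g * norm (b - ba)
       \<le> (b - robit_mean X ba Sa l z) \<bullet> (robit_precision X l Sa *v (b - robit_mean X ba Sa l z)) / 2
         + k * (1 + (\<Sum>i\<in>UNIV. l $ i * (1 + \<bar>z $ i - X $ i \<bullet> b\<bar>)))"
proof -
  obtain s where s: "s > 0" and coercive: "\<And>u. s * (norm u)\<^sup>2 \<le> u \<bullet> (Sa *v u)"
    using pos_def_coercive[OF pd] by blast
  obtain C where C: "C > 0" and residual_le: "\<And>l d. \<forall>i. 0 \<le> l $ i \<Longrightarrow>
      (norm (robit_precision X l Sa *v d))\<^sup>2 \<le> C * (1 + (\<Sum>i\<in>UNIV. l $ i)) * (d \<bullet> (robit_precision X l Sa *v d))"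
    using robit_precision_norm_mult_squared_le[OF pd, of X] by blast
  define M where "M = (\<Sum>i\<in>UNIV. \<Sum>j\<in>UNIV. \<bar>X $ i $ j\<bar>) + 1"
  have M: "\<bar>X $ i $ j\<bar> \<le> M" for i j
    unfolding M_def using entry_abs_le_sum_abs[of X i j] by linarith
  define B where "B = real CARD('p) * M"
  have B: "B > 0"
    by (simp add: B_def M_def add_nonneg_pos sum_nonneg)
  show ?thesis
  proof
    show "min k (min (k * s / (2 * B)) (s\<^sup>2 / (8 * C))) > 0"
      using k s B C by simp
    fix b :: "real^'p" and l z :: "real^'n"
    assume l: "\<forall>i. 0 \<le> l $ i"
    define d where "d = b - robit_mean X ba Sa l z"
    define L where "L = (\<Sum>i\<in>UNIV. l $ i)"
    define E where "E = (\<Sum>i\<in>UNIV. l $ i * \<bar>(X *v b - z) $ i\<bar>)"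
    have L: "L \<ge> 0" and E: "E \<ge> 0"
      using l by (simp_all add: L_def E_def sum_nonneg)
    have "s * norm (b - ba) - B * E \<le> norm (robit_precision X l Sa *v d)"
      using norm_transpose_diag_mult_add_ge[OF coercive M l, of "b - ba" "X *v b - z"]
      unfolding d_def robit_precision_mult_centered[OF pd l] B_def E_def by (simp add: mult.assoc)
    then have "min k (min (k * s / (2 * B)) (s\<^sup>2 / (8 * C))) * norm (b - ba)
        \<le> d \<bullet> (robit_precision X l Sa *v d) / 2 + k * (1 + L + E)"
      using linear_le_quadratic_penalty[OF s B C k _ L E] residual_le[OF l, of d]
      unfolding L_def by simp
    moreover have "L + E = (\<Sum>i\<in>UNIV. l $ i * (1 + \<bar>z $ i - X $ i \<bullet> b\<bar>))"
      unfolding L_def E_def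
      by (simp add: sum.distrib[symmetric] algebra_simps matrix_vector_mul_component abs_minus_commute)
    ultimately show "min k (min (k * s / (2 * B)) (s\<^sup>2 / (8 * C))) * norm (b - ba)
       \<le> (b - robit_mean X ba Sa l z) \<bullet> (robit_precision X l Sa *v (b - robit_mean X ba Sa l z)) / 2
         + k * (1 + (\<Sum>i\<in>UNIV. l $ i * (1 + \<bar>z $ i - X $ i \<bullet> b\<bar>)))"
      unfolding d_def by (simp add: add.assoc)
  qed
qed

lemma robit_beta_pdf_bound:
  fixes X :: "real^'p^'n" and Sa :: "real^'p^'p" and ba :: "real^'p" and \<kappa> :: real
  assumes pd: "pos_def Sa" and \<kappa>: "\<kappa> > 0"
  obtains K g where "K \<ge> 0" "g > 0"
    "\<And>b l z. \<forall>i. 0 \<le> l $ i \<Longrightarrow> robit_beta_pdf X ba Sa l z b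
       \<le> K * exp (- g * norm (b - ba)) * exp (\<kappa> * (\<Sum>i\<in>UNIV. l $ i * (1 + \<bar>z $ i - X $ i \<bullet> b\<bar>)))"
proof -
  define k where "k = \<kappa> / 2"
  have k: "k > 0" using \<kappa> by (simp add: k_def)
  obtain C where C: "C \<ge> 0" and det: "\<And>l. \<forall>i. 0 \<le> l $ i \<Longrightarrow>
      sqrt (det (robit_precision X l Sa)) \<le> C * exp (k * (1 + (\<Sum>i\<in>UNIV. l $ i)))"
    using sqrt_det_robit_precision_bound[OF k, where X = X and Sa = Sa] by blast
  obtain g where g: "g > 0" and form: "\<And>b l z. \<forall>i. 0 \<le> l $ i \<Longrightarrow>
      g * norm (b - ba)
      \<le> (b - robit_mean X ba Sa l z) \<bullet> (robit_precision X l Sa *v (b - robit_mean X ba Sa l z)) / 2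
        + k * (1 + (\<Sum>i\<in>UNIV. l $ i * (1 + \<bar>z $ i - X $ i \<bullet> b\<bar>)))"
    using robit_precision_form_bound[OF pd k, where X = X and ba = ba] by blast
  define c0 where "c0 = (2 * pi) powr (- real CARD('p) / 2)"
  show ?thesis
  proof
    show "c0 * C * exp (2 * k) \<ge> 0"
      using C by (simp add: c0_def)
    show "g > 0" by (rule g)
    fix b :: "real^'p" and l z :: "real^'n"
    assume l: "\<forall>i. 0 \<le> l $ i"
    define d where "d = b - robit_mean X ba Sa l z"
    define q where "q = d \<bullet> (robit_precision X l Sa *v d)"
    define L where "L = (\<Sum>i\<in>UNIV. l $ i)"
    define M where "M = (\<Sum>i\<in>UNIV. l $ i * (1 + \<bar>z $ i - X $ i \<bullet> b\<bar>))"
    have "l $ i \<le> l $ i * (1 + \<bar>z $ i - X $ i \<bullet> b\<bar>)" for i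
      using l[rule_format, of i] by (simp add: mult_le_cancel_left1)
    then have LM: "L \<le> M"
      unfolding L_def M_def by (rule sum_mono)
    have "robit_beta_pdf X ba Sa l z b = c0 * sqrt (det (robit_precision X l Sa)) * exp (- q / 2)"
      unfolding robit_beta_pdf_eq mvn_prec_pdf_def c0_def q_def d_def by simp
    also have "\<dots> \<le> c0 * (C * exp (k * (1 + L))) * exp (k * (1 + M) - g * norm (b - ba))"
    proof (rule mult_mono)
      show "c0 * sqrt (det (robit_precision X l Sa)) \<le> c0 * (C * exp (k * (1 + L)))"
        using det[OF l] unfolding L_def by (simp add: c0_def)
      show "exp (- q / 2) \<le> exp (k * (1 + M) - g * norm (b - ba))"
        using form[OF l, of b z] unfolding M_def q_def d_def by simp
    qed (simp_all add: c0_def C)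
    also have "\<dots> = c0 * C * exp (2 * k) * exp (- g * norm (b - ba)) * exp (k * L + k * M)"
      by (simp add: exp_add[symmetric] algebra_simps)
    also have "\<dots> \<le> c0 * C * exp (2 * k) * exp (- g * norm (b - ba)) * exp (\<kappa> * M)"
    proof -
      have "\<kappa> * L \<le> \<kappa> * M"
        using LM \<kappa> by simp
      then have "k * L + k * M \<le> \<kappa> * M"
        unfolding k_def by linarith
      then show ?thesis
        using C by (intro mult_left_mono) (simp_all add: c0_def)
    qed
    finally show "robit_beta_pdf X ba Sa l z b
       \<le> c0 * C * exp (2 * k) * exp (- g * norm (b - ba)) * exp (\<kappa> * (\<Sum>i\<in>UNIV. l $ i * (1 + \<bar>z $ i - X $ i \<bullet> b\<bar>)))"
      unfolding M_def .
  qed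
qed

section \<open>The kernel on the diagonal\<close>

lemma robit_latent_pdf_mult_exp:
  "robit_latent_pdf v X y b l z * exp (\<kappa> * (\<Sum>i\<in>UNIV. l $ i * (1 + \<bar>z $ i - X $ i \<bullet> b\<bar>)))
     = (\<Prod>i\<in>UNIV. tilted_latent_pdf v \<kappa> (X $ i \<bullet> b) (y $ i) (l $ i) (z $ i))"
proof -
  have "exp (\<kappa> * (\<Sum>i\<in>UNIV. l $ i * (1 + \<bar>z $ i - X $ i \<bullet> b\<bar>)))
      = (\<Prod>i\<in>UNIV. exp (\<kappa> * l $ i * (1 + \<bar>z $ i - X $ i \<bullet> b\<bar>)))"
    by (simp add: sum_distrib_left exp_sum mult.assoc)
  then show ?thesis
    unfolding robit_latent_pdf_def tilted_latent_pdf_def by (simp add: prod.distrib[symmetric])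
qed

lemma tilted_latent_pdf_nonneg: "v > 0 \<Longrightarrow> 0 \<le> tilted_latent_pdf v \<kappa> m yi l z"
  unfolding tilted_latent_pdf_def
  by (intro mult_nonneg_nonneg trunc_t_pdf_nonneg gamma_pdf_nonneg) (simp_all add: add_pos_nonneg)

lemma robit_latent_pdf_nonneg: "v > 0 \<Longrightarrow> 0 \<le> robit_latent_pdf v X y b l z"
  unfolding robit_latent_pdf_def
  by (intro prod_nonneg ballI mult_nonneg_nonneg trunc_t_pdf_nonneg gamma_pdf_nonneg)
    (simp_all add: add_pos_nonneg)

lemma robit_da_integrand_le:
  assumes v: "v > 0" and c: "c \<ge> 0"
    and bound: "robit_beta_pdf X ba Sa l z b \<le> c * exp (\<kappa> * (\<Sum>i\<in>UNIV. l $ i * (1 + \<bar>z $ i - X $ i \<bullet> b\<bar>)))"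
  shows "ennreal (robit_beta_pdf X ba Sa l z b * robit_latent_pdf v X y b l z)
       \<le> ennreal c * (\<Prod>i\<in>UNIV. ennreal (tilted_latent_pdf v \<kappa> (X $ i \<bullet> b) (y $ i) (l $ i) (z $ i)))"
proof -
  have "robit_beta_pdf X ba Sa l z b * robit_latent_pdf v X y b l z
      \<le> c * exp (\<kappa> * (\<Sum>i\<in>UNIV. l $ i * (1 + \<bar>z $ i - X $ i \<bullet> b\<bar>))) * robit_latent_pdf v X y b l z"
    by (intro mult_right_mono bound robit_latent_pdf_nonneg v)
  also have "\<dots> = c * (\<Prod>i\<in>UNIV. tilted_latent_pdf v \<kappa> (X $ i \<bullet> b) (y $ i) (l $ i) (z $ i))"
    unfolding robit_latent_pdf_mult_exp[symmetric] by (simp add: algebra_simps)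
  finally have "ennreal (robit_beta_pdf X ba Sa l z b * robit_latent_pdf v X y b l z)
      \<le> ennreal (c * (\<Prod>i\<in>UNIV. tilted_latent_pdf v \<kappa> (X $ i \<bullet> b) (y $ i) (l $ i) (z $ i)))"
    by (rule ennreal_leI)
  also have "\<dots> = ennreal c * (\<Prod>i\<in>UNIV. ennreal (tilted_latent_pdf v \<kappa> (X $ i \<bullet> b) (y $ i) (l $ i) (z $ i)))"
    using c tilted_latent_pdf_nonneg[OF v] by (simp add: ennreal_mult' prod_ennreal)
  finally show ?thesis .
qed

lemma robit_da_kernel_diag_le:
  fixes X :: "real^'p^'n"
  assumes v: "v > 0" and \<kappa>: "0 \<le> \<kappa>" "\<kappa> \<le> min v 1 / 8" and c: "c \<ge> 0"
    and bound: "\<And>l z. \<forall>i. 0 < l $ i \<Longrightarrow>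
      robit_beta_pdf X ba Sa l z b \<le> c * exp (\<kappa> * (\<Sum>i\<in>UNIV. l $ i * (1 + \<bar>z $ i - X $ i \<bullet> b\<bar>)))"
  shows "robit_da_kernel v X y ba Sa b b \<le> ennreal (c * (2 powr ((v + 1) / 2)) ^ CARD('n))"
proof -
  define \<psi> where "\<psi> i = tilted_latent_pdf v \<kappa> (X $ i \<bullet> b) (y $ i)" for i
  have "robit_da_kernel v X y ba Sa b b
      \<le> (\<integral>\<^sup>+l. ennreal c * (\<integral>\<^sup>+z. (\<Prod>i\<in>UNIV. ennreal (\<psi> i (l $ i) (z $ i))) \<partial>lborel) \<partial>lborel)"
    unfolding robit_da_kernel_def
  proof (intro nn_integral_mono)
    fix l :: "real^'n"
    show "indicator {l. \<forall>i. 0 < l $ i} l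
        * (\<integral>\<^sup>+z. ennreal (robit_beta_pdf X ba Sa l z b * robit_latent_pdf v X y b l z) \<partial>lborel)
        \<le> ennreal c * (\<integral>\<^sup>+z. (\<Prod>i\<in>UNIV. ennreal (\<psi> i (l $ i) (z $ i))) \<partial>lborel)"
      using robit_da_integrand_le[OF v c bound]
      by (cases "\<forall>i. 0 < l $ i") (auto simp: \<psi>_def nn_integral_cmult[symmetric] intro!: nn_integral_mono)
  qed
  also have "\<dots> = (\<integral>\<^sup>+l. ennreal c * (\<Prod>i\<in>UNIV. \<integral>\<^sup>+u. ennreal (\<psi> i (l $ i) u) \<partial>lborel) \<partial>lborel)"
    by (subst nn_integral_lborel_vec_prod) (simp_all add: \<psi>_def)
  also have "\<dots> = ennreal c * (\<Prod>i\<in>UNIV. \<integral>\<^sup>+t. (\<integral>\<^sup>+u. ennreal (\<psi> i t u) \<partial>lborel) \<partial>lborel)"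
    by (subst nn_integral_lborel_vec_prod[symmetric]) (simp_all add: \<psi>_def nn_integral_cmult)
  also have "\<dots> \<le> ennreal c * (\<Prod>i\<in>(UNIV::'n set). ennreal (2 powr ((v + 1) / 2)))"
    unfolding \<psi>_def
    by (intro mult_left_mono prod_mono_ennreal nn_integral_tilted_latent_pdf_le[OF v \<kappa>]) simp
  also have "\<dots> = ennreal (c * (2 powr ((v + 1) / 2)) ^ CARD('n))"
    using c by (simp add: ennreal_mult' ennreal_power)
  finally show ?thesis .
qed

theorem theorem1:
  fixes X :: "real^'p^'n" and y :: "real^'n" and ba :: "real^'p"
    and Sa :: "real^'p^'p" and \<nu> :: real
  assumes "\<forall>i. y $ i \<in> {0, 1}"
    and "pos_def Sa"
    and "\<nu> > 2"
  shows "(\<integral>\<^sup>+ b. robit_da_kernel \<nu> X y ba Sa b b \<partial>lborel) < \<infinity>"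
proof -
  have \<nu>: "\<nu> > 0" using assms(3) by simp
  define \<kappa> where "\<kappa> = min \<nu> 1 / 8"
  have \<kappa>: "\<kappa> > 0" using \<nu> by (simp add: \<kappa>_def)
  obtain K g where K: "K \<ge> 0" and g: "g > 0" and beta_bound: "\<And>b l z. \<forall>i. 0 \<le> l $ i \<Longrightarrow>
      robit_beta_pdf X ba Sa l z b
      \<le> K * exp (- g * norm (b - ba)) * exp (\<kappa> * (\<Sum>i\<in>UNIV. l $ i * (1 + \<bar>z $ i - X $ i \<bullet> b\<bar>)))"
    using robit_beta_pdf_bound[OF assms(2) \<kappa>, where X = X and ba = ba] by blast
  define M where "M = (2 powr ((\<nu> + 1) / 2)) ^ CARD('n)"
  have "robit_da_kernel \<nu> X y ba Sa b b \<le> ennreal (K * M) * ennreal (exp (- g * norm (b - ba)))" for b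
  proof -
    have "robit_da_kernel \<nu> X y ba Sa b b \<le> ennreal (K * exp (- g * norm (b - ba)) * M)"
      unfolding M_def using \<kappa> K
      by (intro robit_da_kernel_diag_le[OF \<nu>, where \<kappa> = \<kappa>] beta_bound)
        (auto simp: \<kappa>_def less_imp_le)
    then show ?thesis
      using K by (simp add: M_def ennreal_mult'[symmetric] mult_ac)
  qed
  then have "(\<integral>\<^sup>+ b. robit_da_kernel \<nu> X y ba Sa b b \<partial>lborel)
      \<le> ennreal (K * M) * (\<integral>\<^sup>+ b. ennreal (exp (- g * norm (b - ba))) \<partial>lborel)"
    by (subst nn_integral_cmult[symmetric]) (simp_all add: nn_integral_mono)
  also have "\<dots> < \<infinity>"
    using nn_integral_exp_neg_norm_finite[OF g, of ba] by (simp add: ennreal_mult_less_top)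
  finally show ?thesis .
qed

end
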